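(* (1) For integers $n\ge0$, $0\le l<q^n$ and arbitrary $k\ge0$, $$\sum_{m\in\mathbf{F}_q[T],\ \deg m<n}D_k(m)D'_l(m)=\begin{cases}0&\text{if }k+l\neq q^n-1,\\(-1)^n&\text{if }k+l=q^n-1,\end{cases}$$ the sum running over all polynomials of degree $<n$ (including $0$). (2) For $0\le l<q^n$ and $0\le k<q^n$, $$\sum_{m\ \text{monic},\ \deg m=n}D_k(m)D'_l(m)=\begin{cases}0&\text{if }k+l\neq q^n-1,\\(-1)^n&\text{if }k+l=q^n-1.\end{cases}$$
   Context: Let $q$ be a prime power and $\mathbf{F}_q[T]\subset O=\mathbf{F}_q[[T]]$. Hasse derivatives: $\mathcal{D}_n(\sum_ia_iT^i)=\sum_i\binom{i}{n}a_iT^{i-n}$ (binomial coefficients read in $\mathbf{F}_q$). For $j\ge0$ with base-$q$ expansion $j=\alpha_0+\alpha_1q+\cdots+\alpha_sq^s$ ($0\le\alpha_i<q$): $D_j(x)=\prod_{n=0}^s\mathcal{D}_n(x)^{\alpha_n}$ ($D_0=1$), and $D'_j(x)=\prod_{n=0}^sD'_{\alpha_nq^n}(x)$ where $D'_{\alpha q^n}(x)=\mathcal{D}_n(x)^\alpha$ if $0\le\alpha<q-1$ and $D'_{(q-1)q^n}(x)=\mathcal{D}_n(x)^{q-1}-1$. *)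

theory Defs
  imports "HOL-Computational_Algebra.Polynomial" "HOL-Library.Cardinality"
begin

text \<open>F_q is modeled by a finite field type 'a, q = CARD('a); F_q[T] is 'a poly.\<close>

definition hasse :: "nat \<Rightarrow> 'a::{finite,field} poly \<Rightarrow> 'a poly" where
  "hasse n p = (\<Sum>i\<le>degree p. monom (of_nat (i choose n) * coeff p i) (i - n))"

definition qdigit :: "nat \<Rightarrow> nat \<Rightarrow> nat \<Rightarrow> nat" where
  "qdigit q j n = (j div q ^ n) mod q"

text \<open>Digits with index n > j are zero, so the product over n \<le> j covers all digits.\<close>
definition Dk :: "nat \<Rightarrow> 'a::{finite,field} poly \<Rightarrow> 'a poly" where
  "Dk j x = (\<Prod>n\<le>j. hasse n x ^ qdigit CARD('a) j n)"

definition Dp :: "nat \<Rightarrow> 'a::{finite,field} poly \<Rightarrow> 'a poly" where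
  "Dp j x = (\<Prod>n\<le>j. if qdigit CARD('a) j n = CARD('a) - 1
                        then hasse n x ^ (CARD('a) - 1) - 1
                        else hasse n x ^ qdigit CARD('a) j n)"

end

theory Submission
  imports Defs
begin

(* Both D_k and D'_l are products, over the base-q digits j < n of k and l, of functions of the
   Hasse derivative \<D>_j m.  Writing m = c + a T^(n-1) + r with deg r < n - 1, the top derivative
   \<D>_(n-1) m is a + \<D>_(n-1) c, while by induction (for every shift c) the sum over r of the
   lower factors does not depend on c + a T^(n-1).  Hence the sum factors into n sums
   \<Sum>_a f(a + x) with f(b) = b^\<alpha> D'_\<beta>(b) of degree at most 2q - 2.  For e \<le> 2q - 2,
   \<Sum>_a (a + x)^e is the constant \<Sum>_a a^e, so each factor is -1 if \<alpha> + \<beta> = q - 1 and 0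
   otherwise; and k + l = q^n - 1 exactly when all digit pairs sum to q - 1.  Monic polynomials of
   degree n are the shifts T^n + r with deg r < n. *)

section \<open>Power sums over a finite field\<close>

lemma card_field_ge_2: "CARD('a::{finite,field}) \<ge> 2"
proof -
  have "card {0::'a, 1} \<le> CARD('a)"
    by (rule card_mono) auto
  then show ?thesis by simp
qed

lemma of_nat_card_field: "(of_nat CARD('a::{finite,field}) :: 'a) = 0"
proof -
  have "(\<Sum>a\<in>UNIV. a + 1) = (\<Sum>a\<in>(UNIV::'a set). a)"
    by (rule sum.reindex_bij_witness[of _ "\<lambda>a. a - 1" "\<lambda>a. a + 1"]) auto
  then show ?thesis
    by (simp add: sum.distrib)
qed

lemma field_power_card_minus_1:
  fixes x :: "'a::{finite,field}"
  assumes "x \<noteq> 0"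
  shows "x ^ (CARD('a) - 1) = 1"
proof -
  have "(\<Prod>y\<in>UNIV-{0}. x * y) = (\<Prod>y\<in>UNIV-{0::'a}. y)"
    by (rule prod.reindex_bij_witness[of _ "\<lambda>y. y / x" "\<lambda>y. x * y"]) (use assms in auto)
  moreover have "(\<Prod>y\<in>UNIV-{0}. x * y) = x ^ (CARD('a) - 1) * (\<Prod>y\<in>UNIV-{0::'a}. y)"
    by (simp add: prod.distrib card_Diff_singleton)
  moreover have "(\<Prod>y\<in>UNIV-{0::'a}. y) \<noteq> 0"
    by simp
  ultimately show ?thesis
    by simp
qed

definition power_sum :: "nat \<Rightarrow> 'a::{finite,field}" where
  "power_sum e = (\<Sum>a\<in>UNIV. a ^ e)"

lemma power_sum_eq_0:
  assumes "e < CARD('a) - 1"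
  shows "power_sum e = (0::'a::{finite,field})"
proof (cases "e = 0")
  case True
  then show ?thesis
    by (simp add: power_sum_def of_nat_card_field)
next
  case False
  let ?p = "monom (1::'a) e - 1"
  have "coeff ?p e = 1"
    using False by simp
  then have "?p \<noteq> 0"
    by (metis coeff_0 zero_neq_one)
  moreover have "degree ?p \<le> e"
    by (intro degree_diff_le) (auto simp: degree_monom_le)
  ultimately have "card {x. poly ?p x = 0} \<le> e"
    using card_poly_roots_bound le_trans by blast
  then have "card {x::'a. x ^ e = 1} \<le> e"
    by (simp add: poly_monom)
  moreover have "e < card (UNIV - {0::'a})"
    using assms by (simp add: card_Diff_singleton)
  ultimately have "\<not> UNIV - {0} \<subseteq> {x::'a. x ^ e = 1}"
    by (metis card_mono finite le_trans not_le)
  then obtain c :: 'a where c: "c \<noteq> 0" "c ^ e \<noteq> 1"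
    by blast
  have "power_sum e = (\<Sum>a\<in>UNIV. (c * a) ^ e)"
    unfolding power_sum_def
    by (rule sum.reindex_bij_witness[of _ "\<lambda>y. c * y" "\<lambda>y. y / c"]) (use c in auto)
  also have "\<dots> = c ^ e * power_sum e"
    by (simp add: power_sum_def power_mult_distrib sum_distrib_left)
  finally have "(c ^ e - 1) * power_sum e = 0"
    by (simp add: algebra_simps)
  with c show ?thesis
    by simp
qed

lemma power_sum_card_minus_1: "power_sum (CARD('a) - 1) = (-1::'a::{finite,field})"
proof -
  have "power_sum (CARD('a) - 1) = (\<Sum>a\<in>UNIV-{0::'a}. a ^ (CARD('a) - 1))"
    unfolding power_sum_def using card_field_ge_2[where 'a='a]
    by (intro sum.mono_neutral_right) auto
  also have "\<dots> = (\<Sum>a\<in>UNIV-{0::'a}. 1)"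
    by (intro sum.cong refl field_power_card_minus_1) simp
  also have "\<dots> = of_nat (CARD('a) - 1)"
    by (simp add: card_Diff_singleton)
  also have "\<dots> = -1"
    using card_field_ge_2[where 'a='a] by (simp add: of_nat_diff of_nat_card_field)
  finally show ?thesis .
qed

lemma power_sum_add_card_minus_1:
  assumes "0 < e"
  shows "power_sum (e + (CARD('a) - 1)) = (power_sum e :: 'a::{finite,field})"
  unfolding power_sum_def
proof (rule sum.cong)
  fix x :: 'a
  show "x ^ (e + (CARD('a) - 1)) = x ^ e"
  proof (cases "x = 0")
    case False
    then show ?thesis
      by (simp only: power_add field_power_card_minus_1[OF False]) simp
  qed (use assms card_field_ge_2[where 'a='a] in \<open>simp add: power_0_left\<close>)
qed simp

lemma power_sum_below_double:
  assumes "e < 2 * (CARD('a) - 1)"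
  shows "power_sum e = (if e = CARD('a) - 1 then -1 else (0::'a::{finite,field}))"
proof -
  consider "e < CARD('a) - 1" | "e = CARD('a) - 1"
    | d where "0 < d" "d < CARD('a) - 1" "e = d + (CARD('a) - 1)"
  proof (cases "e \<le> CARD('a) - 1")
    case False
    then show ?thesis
      using assms that(3)[of "e - (CARD('a) - 1)"] by linarith
  qed (use that in linarith)
  then show ?thesis
  proof cases
    case (3 d)
    then show ?thesis
      using power_sum_add_card_minus_1[of d, where 'a='a] power_sum_eq_0[of d, where 'a='a] by simp
  qed (use power_sum_card_minus_1[where 'a='a] in \<open>simp_all add: power_sum_eq_0\<close>)
qed

lemma pcompose_power_left: "pcompose (p ^ n) q = pcompose p q ^ n"
  by (induction n) (simp_all add: pcompose_mult pcompose_1)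

(* The coefficient of X^j, j \<ge> q, is a multiple of a power sum of exponent e - j < q - 1, hence 0;
   so the left side has degree < q and is determined by its values, which are all power_sum e. *)
lemma sum_linear_power_eq_const:
  assumes "e \<le> 2 * (CARD('a) - 1)"
  shows "(\<Sum>a\<in>(UNIV::'a::{finite,field} set). [:a, 1:] ^ e) = [:power_sum e:]"
proof (rule poly_eqI_degree[where A = UNIV])
  fix x :: 'a
  have "poly (\<Sum>a\<in>(UNIV::'a set). [:a, 1:] ^ e) x = (\<Sum>a\<in>UNIV. (a + x) ^ e)"
    by (simp add: poly_sum add.commute)
  also have "\<dots> = power_sum e"
    unfolding power_sum_def
    by (rule sum.reindex_bij_witness[of _ "\<lambda>a. a - x" "\<lambda>a. a + x"]) auto
  finally show "poly (\<Sum>a\<in>(UNIV::'a set). [:a, 1:] ^ e) x = poly [:power_sum e:] x"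
    by simp
next
  have "coeff (\<Sum>a\<in>(UNIV::'a set). [:a, 1:] ^ e) j = (0::'a)" if "CARD('a) \<le> j" for j
  proof (cases "j \<le> e")
    case True
    have "coeff (\<Sum>a\<in>(UNIV::'a set). [:a, 1:] ^ e) j = of_nat (e choose j) * power_sum (e - j)"
      using True by (simp add: coeff_sum coeff_linear_poly_power power_sum_def sum_distrib_left)
    also have "power_sum (e - j) = (0::'a)"
      using assms that card_field_ge_2[where 'a='a] by (intro power_sum_eq_0) linarith
    finally show ?thesis
      by simp
  next
    case False
    then show ?thesis
      by (simp add: coeff_sum coeff_eq_0 degree_linear_power)
  qed
  then have "degree (\<Sum>a\<in>(UNIV::'a set). [:a, 1:] ^ e) \<le> CARD('a) - 1"
    using card_field_ge_2[where 'a='a] by (intro degree_le) auto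
  then show "degree (\<Sum>a\<in>(UNIV::'a set). [:a, 1:] ^ e) < card (UNIV :: 'a set)"
    using card_field_ge_2[where 'a='a] by linarith
qed simp

lemma sum_shift_power_eq_const:
  assumes "e \<le> 2 * (CARD('a) - 1)"
  shows "(\<Sum>a\<in>UNIV. ([:a:] + x) ^ e) = [:power_sum e :: 'a::{finite,field}:]"
proof -
  have "(\<Sum>a\<in>UNIV. ([:a:] + x) ^ e) = pcompose (\<Sum>a\<in>UNIV. [:a, 1:] ^ e) x"
    by (simp add: pcompose_sum pcompose_power_left pcompose_pCons)
  then show ?thesis
    using sum_linear_power_eq_const[OF assms] by simp
qed

(* The factor D'_(\<beta> q^j) of D'_l, as a function of b = \<D>_j x. *)
definition Dp_digit :: "nat \<Rightarrow> 'a::{finite,field} poly \<Rightarrow> 'a poly" where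
  "Dp_digit \<beta> b = (if \<beta> = CARD('a) - 1 then b ^ (CARD('a) - 1) - 1 else b ^ \<beta>)"

lemma sum_shift_digit_factor:
  fixes x :: "'a::{finite,field} poly"
  assumes "\<alpha> < CARD('a)" "\<beta> < CARD('a)"
  shows "(\<Sum>a\<in>UNIV. ([:a:] + x) ^ \<alpha> * Dp_digit \<beta> ([:a:] + x)) =
           (if \<alpha> + \<beta> + 1 = CARD('a) then -1 else 0)"
proof (cases "\<beta> = CARD('a) - 1")
  case False
  then have "(\<Sum>a\<in>UNIV. ([:a:] + x) ^ \<alpha> * Dp_digit \<beta> ([:a:] + x)) = [:power_sum (\<alpha> + \<beta>):]"
    using assms by (simp add: Dp_digit_def flip: power_add) (rule sum_shift_power_eq_const, linarith)
  also have "\<dots> = (if \<alpha> + \<beta> + 1 = CARD('a) then -1 else 0)"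
    using assms False by (subst power_sum_below_double) (auto simp: one_pCons)
  finally show ?thesis .
next
  case True
  have "(\<Sum>a\<in>UNIV. ([:a:] + x) ^ \<alpha> * Dp_digit \<beta> ([:a:] + x)) =
          (\<Sum>a\<in>UNIV. ([:a:] + x) ^ (\<alpha> + (CARD('a) - 1))) - (\<Sum>a\<in>UNIV. ([:a:] + x) ^ \<alpha>)"
    unfolding Dp_digit_def True
    by (simp only: refl if_True power_add right_diff_distrib mult_1_right sum_subtractf)
  also have "\<dots> = [:power_sum (\<alpha> + (CARD('a) - 1)) - power_sum \<alpha>:]"
    using assms by (simp add: sum_shift_power_eq_const)
  also have "\<dots> = (if \<alpha> + \<beta> + 1 = CARD('a) then -1 else 0)"
  proof (cases "\<alpha> = 0")
    case True
    then show ?thesis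
      using \<open>\<beta> = CARD('a) - 1\<close> power_sum_card_minus_1[where 'a='a] card_field_ge_2[where 'a='a]
      by (simp add: power_sum_eq_0 one_pCons)
  qed (use \<open>\<beta> = CARD('a) - 1\<close> power_sum_add_card_minus_1[of \<alpha>, where 'a='a]
           card_field_ge_2[where 'a='a] in simp)
  finally show ?thesis .
qed

section \<open>Hasse derivatives of polynomials of bounded degree\<close>

definition polys_deg_less :: "nat \<Rightarrow> 'a::zero poly set" where
  "polys_deg_less n = {p. p = 0 \<or> degree p < n}"

lemma polys_deg_less_iff: "p \<in> polys_deg_less n \<longleftrightarrow> (\<forall>i\<ge>n. coeff p i = 0)"
proof
  assume "p \<in> polys_deg_less n"
  then show "\<forall>i\<ge>n. coeff p i = 0"
    by (auto simp: polys_deg_less_def coeff_eq_0)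
next
  assume "\<forall>i\<ge>n. coeff p i = 0"
  then have "p = 0 \<or> degree p < n"
    using leading_coeff_0_iff not_le by blast
  then show "p \<in> polys_deg_less n"
    by (simp add: polys_deg_less_def)
qed

lemma sum_polys_deg_less_Suc:
  fixes f :: "'a::ab_group_add poly \<Rightarrow> 'b::comm_monoid_add"
  shows "(\<Sum>p\<in>polys_deg_less (Suc n). f p) = (\<Sum>a\<in>UNIV. \<Sum>r\<in>polys_deg_less n. f (monom a n + r))"
proof -
  have "(\<Sum>a\<in>UNIV. \<Sum>r\<in>polys_deg_less n. f (monom a n + r)) =
          (\<Sum>(a, r)\<in>UNIV \<times> polys_deg_less n. f (monom a n + r))"
    by (rule sum.cartesian_product)
  also have "\<dots> = (\<Sum>p\<in>polys_deg_less (Suc n). f p)"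
  proof (rule sum.reindex_bij_witness[of _ "\<lambda>p. (coeff p n, p - monom (coeff p n) n)"
          "\<lambda>(a, r). monom a n + r"])
    fix ar :: "'a \<times> 'a poly"
    assume "ar \<in> UNIV \<times> polys_deg_less n"
    moreover obtain a r where ar: "ar = (a, r)"
      by (cases ar)
    ultimately have r: "\<forall>i\<ge>n. coeff r i = 0"
      by (simp add: polys_deg_less_iff)
    show "(\<lambda>p. (coeff p n, p - monom (coeff p n) n)) ((\<lambda>(a, r). monom a n + r) ar) = ar"
      using r by (simp add: ar)
    show "(\<lambda>(a, r). monom a n + r) ar \<in> polys_deg_less (Suc n)"
      using r by (simp add: ar polys_deg_less_iff)
  next
    fix p :: "'a poly"
    assume "p \<in> polys_deg_less (Suc n)"
    then have "\<forall>i>n. coeff p i = 0"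
      by (simp add: polys_deg_less_iff Suc_le_eq)
    then show "(\<lambda>p. (coeff p n, p - monom (coeff p n) n)) p \<in> UNIV \<times> polys_deg_less n"
      by (auto simp: polys_deg_less_iff le_less)
    show "(\<lambda>(a, r). monom a n + r) ((\<lambda>p. (coeff p n, p - monom (coeff p n) n)) p) = p"
      by simp
  qed (simp split: prod.split)
  finally show ?thesis ..
qed

lemma monic_degree_eq_image:
  "{p :: 'a::comm_ring_1 poly. lead_coeff p = 1 \<and> degree p = n} =
     (\<lambda>r. monom 1 n + r) ` polys_deg_less n"
proof (intro set_eqI iffI)
  fix p :: "'a poly"
  assume p: "p \<in> {p. lead_coeff p = 1 \<and> degree p = n}"
  have "coeff (p - monom 1 n) i = 0" if "n \<le> i" for i
    using p that by (cases "i = n") (auto simp: coeff_eq_0)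
  then have "p - monom 1 n \<in> polys_deg_less n"
    by (simp add: polys_deg_less_iff)
  then show "p \<in> (\<lambda>r. monom 1 n + r) ` polys_deg_less n"
    by (rule rev_image_eqI) simp
next
  fix p :: "'a poly"
  assume "p \<in> (\<lambda>r. monom 1 n + r) ` polys_deg_less n"
  then obtain r where r: "r \<in> polys_deg_less n" and p: "p = monom 1 n + r"
    by blast
  have "coeff p n = 1" "\<forall>i>n. coeff p i = 0"
    using r by (auto simp: p polys_deg_less_iff)
  then have "degree p = n"
    by (intro antisym degree_le le_degree) simp_all
  then show "p \<in> {p. lead_coeff p = 1 \<and> degree p = n}"
    using \<open>coeff p n = 1\<close> by simp
qed

lemma coeff_hasse: "coeff (hasse n p) k = of_nat ((k + n) choose n) * coeff p (k + n)"
proof -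
  have "coeff (hasse n p) k = (\<Sum>i\<le>degree p. if i = k + n then of_nat (i choose n) * coeff p i else 0)"
    unfolding hasse_def coeff_sum
    by (intro sum.cong refl) (auto simp: coeff_monom binomial_eq_0)
  also have "\<dots> = of_nat ((k + n) choose n) * coeff p (k + n)"
    by (auto simp: coeff_eq_0)
  finally show ?thesis .
qed

lemma hasse_add: "hasse n (p + q) = hasse n p + hasse n q"
  by (simp add: poly_eq_iff coeff_hasse algebra_simps)

lemma hasse_monom: "hasse n (monom a n) = [:a:]"
  by (auto simp: poly_eq_iff coeff_hasse coeff_pCons')

lemma hasse_eq_0: "p \<in> polys_deg_less n \<Longrightarrow> n \<le> j \<Longrightarrow> hasse j p = 0"
  by (simp add: poly_eq_iff coeff_hasse polys_deg_less_iff)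

lemma sum_polys_deg_less_prod_hasse:
  fixes H :: "nat \<Rightarrow> 'a::{finite,field} poly \<Rightarrow> 'a poly"
  assumes "\<And>j x. (\<Sum>a\<in>UNIV. H j ([:a:] + x)) = S j"
  shows "(\<Sum>r\<in>polys_deg_less n. \<Prod>j<n. H j (hasse j (c + r))) = (\<Prod>j<n. S j)"
proof (induction n arbitrary: c)
  case 0
  have "polys_deg_less 0 = {0::'a poly}"
    by (auto simp: polys_deg_less_def)
  then show ?case
    by simp
next
  case (Suc n)
  have top: "hasse n (c + (monom a n + r)) = [:a:] + hasse n c"
    if "r \<in> polys_deg_less n" for a r
    using hasse_eq_0[OF that] by (simp add: hasse_add hasse_monom)
  have "(\<Sum>r\<in>polys_deg_less (Suc n). \<Prod>j<Suc n. H j (hasse j (c + r))) =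
          (\<Sum>a\<in>UNIV. \<Sum>r\<in>polys_deg_less n. H n ([:a:] + hasse n c) *
             (\<Prod>j<n. H j (hasse j ((c + monom a n) + r))))"
    unfolding sum_polys_deg_less_Suc
    by (intro sum.cong refl) (simp only: prod.lessThan_Suc top add.assoc mult.commute)
  also have "\<dots> = (\<Sum>a\<in>UNIV. H n ([:a:] + hasse n c) * (\<Prod>j<n. S j))"
    by (simp only: Suc.IH flip: sum_distrib_left)
  also have "\<dots> = (\<Sum>a\<in>UNIV. H n ([:a:] + hasse n c)) * (\<Prod>j<n. S j)"
    by (rule sum_distrib_right[symmetric])
  also have "\<dots> = (\<Prod>j<Suc n. S j)"
    by (simp add: assms)
  finally show ?case .
qed

section \<open>Base-q digits\<close>

lemma qdigit_Suc: "qdigit q k (Suc j) = qdigit q (k div q) j"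
  by (simp add: qdigit_def div_mult2_eq mult.commute)

lemma qdigit_0: "qdigit q k 0 = k mod q"
  by (simp add: qdigit_def)

lemma qdigit_less: "0 < q \<Longrightarrow> qdigit q k j < q"
  by (simp add: qdigit_def)

lemma self_less_power: "2 \<le> q \<Longrightarrow> j < (q::nat) ^ j"
  using less_exp[of j] power_mono[of 2 q j] by linarith

lemma qdigit_eq_0_beyond:
  assumes "2 \<le> q" "k < q ^ n" "n \<le> j \<or> k < j"
  shows "qdigit q k j = 0"
proof -
  have "k < q ^ j"
  proof (cases "n \<le> j")
    case True
    then show ?thesis
      using assms(1,2) power_increasing[of n j q] by linarith
  next
    case False
    then show ?thesis
      using assms(1,3) self_less_power[of q j] by simp
  qed
  then show ?thesis
    by (simp add: qdigit_def)
qed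

lemma qdigit_nonzero_beyond:
  assumes "2 \<le> q" "q ^ n \<le> k"
  obtains j where "n \<le> j" "j \<le> k" "qdigit q k j \<noteq> 0"
proof -
  have "1 \<le> k"
    using assms order_trans[OF one_le_power[of q n]] by simp
  then obtain j where j: "q ^ j \<le> k" "k < q ^ (j + 1)"
    using ex_power_ivl1[OF assms(1)] by blast
  have "n \<le> j"
  proof (rule ccontr)
    assume "\<not> n \<le> j"
    then have "q ^ (j + 1) \<le> q ^ n"
      using assms(1) by (intro power_increasing) simp_all
    then show False
      using j(2) assms(2) by linarith
  qed
  moreover have "j \<le> k"
    using self_less_power[OF assms(1), of j] j(1) by linarith
  moreover have "qdigit q k j \<noteq> 0"
  proof -
    have "0 < k div q ^ j" "k div q ^ j < q"
      using j assms(1) by (simp_all add: div_greater_zero_iff less_mult_imp_div_less mult.commute)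
    then show ?thesis
      by (simp add: qdigit_def)
  qed
  ultimately show ?thesis
    using that by blast
qed

lemma add_eq_mult_iff_digits:
  fixes q k l N :: nat
  assumes "0 < q"
  shows "k + l + 1 = q * N \<longleftrightarrow> k mod q + l mod q + 1 = q \<and> k div q + l div q + 1 = N"
proof -
  let ?s = "k mod q + l mod q + 1" and ?t = "k div q + l div q"
  have split: "k + l + 1 = ?s + q * ?t"
    by (simp add: algebra_simps)
  show ?thesis
  proof
    assume eq: "k + l + 1 = q * N"
    have "q dvd ?s + q * ?t"
      using split eq by (metis dvd_triv_left)
    then have "q dvd ?s"
      using dvd_add_left_iff[of q "q * ?t" ?s] by simp
    then obtain c where c: "?s = q * c"
      by blast
    have "q * c < q * 2"
      using c mod_less_divisor[OF assms, of k] mod_less_divisor[OF assms, of l] by linarith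
    then have "c < 2"
      by simp
    moreover have "c \<noteq> 0"
      using c by (metis add_is_0 mult_0_right one_neq_zero)
    ultimately have "?s = q"
      using c by (simp add: less_2_cases_iff)
    have "q * (?t + 1) = ?s + q * ?t"
      using \<open>?s = q\<close> by (simp add: algebra_simps)
    also have "\<dots> = q * N"
      using split eq by linarith
    finally have "?t + 1 = N"
      using assms by (metis mult_left_cancel neq0_conv)
    with \<open>?s = q\<close> show "?s = q \<and> ?t + 1 = N" ..
  next
    assume "?s = q \<and> ?t + 1 = N"
    then have "?s + q * ?t = q * N"
      by (metis mult.right_neutral distrib_left add.commute)
    then show "k + l + 1 = q * N"
      using split by linarith
  qed
qed

lemma add_eq_power_iff_qdigits:
  fixes q :: nat
  assumes "0 < q"
  shows "k < q ^ n \<Longrightarrow> l < q ^ n \<Longrightarrow>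
           k + l + 1 = q ^ n \<longleftrightarrow> (\<forall>j<n. qdigit q k j + qdigit q l j + 1 = q)"
proof (induction n arbitrary: k l)
  case 0
  then show ?case
    by simp
next
  case (Suc n)
  have "k div q < q ^ n" "l div q < q ^ n"
    using Suc.prems by (simp_all add: less_mult_imp_div_less mult.commute)
  note IH = Suc.IH[OF this]
  have "k + l + 1 = q ^ Suc n \<longleftrightarrow> k mod q + l mod q + 1 = q \<and> k div q + l div q + 1 = q ^ n"
    using add_eq_mult_iff_digits[OF assms, of k l "q ^ n"] by simp
  also have "\<dots> \<longleftrightarrow>
      qdigit q k 0 + qdigit q l 0 + 1 = q \<and> (\<forall>j<n. qdigit q k (Suc j) + qdigit q l (Suc j) + 1 = q)"
    by (simp only: IH qdigit_0 qdigit_Suc)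
  also have "\<dots> \<longleftrightarrow> (\<forall>j<Suc n. qdigit q k j + qdigit q l j + 1 = q)"
    by (auto simp: less_Suc_eq_0_disj)
  finally show ?case .
qed

section \<open>The orthogonality sums\<close>

lemma Dk_eq_prod_lessThan:
  fixes m :: "'a::{finite,field} poly"
  assumes "k < CARD('a) ^ n"
  shows "Dk k m = (\<Prod>j<n. hasse j m ^ qdigit CARD('a) k j)"
  unfolding Dk_def
  by (rule prod.mono_neutral_cong)
     (auto simp: qdigit_eq_0_beyond[OF card_field_ge_2 assms] not_less)

lemma Dp_eq_prod_lessThan:
  fixes m :: "'a::{finite,field} poly"
  assumes "l < CARD('a) ^ n"
  shows "Dp l m = (\<Prod>j<n. Dp_digit (qdigit CARD('a) l j) (hasse j m))"
  unfolding Dp_def Dp_digit_def using card_field_ge_2[where 'a='a]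
  by (intro prod.mono_neutral_cong)
     (auto simp: qdigit_eq_0_beyond[OF card_field_ge_2 assms] not_less)

lemma Dk_eq_0:
  fixes m :: "'a::{finite,field} poly"
  assumes "CARD('a) ^ n \<le> k" "m \<in> polys_deg_less n"
  shows "Dk k m = 0"
proof -
  obtain j where j: "n \<le> j" "j \<le> k" "qdigit CARD('a) k j \<noteq> 0"
    using qdigit_nonzero_beyond[OF card_field_ge_2 assms(1)] .
  then have "hasse j m ^ qdigit CARD('a) k j = 0"
    using hasse_eq_0[OF assms(2)] by simp
  then show ?thesis
    unfolding Dk_def using j(2) by (intro prod_zero) auto
qed

lemma sum_shift_Dk_Dp:
  fixes c :: "'a::{finite,field} poly"
  assumes "k < CARD('a) ^ n" "l < CARD('a) ^ n"
  shows "(\<Sum>r\<in>polys_deg_less n. Dk k (c + r) * Dp l (c + r)) =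
           (if k + l + 1 = CARD('a) ^ n then (-1) ^ n else 0)"
proof -
  let ?\<alpha> = "qdigit CARD('a) k" and ?\<beta> = "qdigit CARD('a) l"
  have "(\<Sum>r\<in>polys_deg_less n. Dk k (c + r) * Dp l (c + r)) =
          (\<Sum>r\<in>polys_deg_less n. \<Prod>j<n.
             hasse j (c + r) ^ ?\<alpha> j * Dp_digit (?\<beta> j) (hasse j (c + r)))"
    by (simp add: Dk_eq_prod_lessThan[OF assms(1)] Dp_eq_prod_lessThan[OF assms(2)] prod.distrib)
  also have "\<dots> = (\<Prod>j<n. if ?\<alpha> j + ?\<beta> j + 1 = CARD('a) then -1 else 0)"
    by (rule sum_polys_deg_less_prod_hasse) (simp add: sum_shift_digit_factor qdigit_less)
  also have "\<dots> = (if \<forall>j<n. ?\<alpha> j + ?\<beta> j + 1 = CARD('a) then (-1) ^ n else 0)"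
    by (auto intro: prod_zero)
  also have "\<dots> = (if k + l + 1 = CARD('a) ^ n then (-1) ^ n else 0)"
    using add_eq_power_iff_qdigits[OF _ assms] by simp
  finally show ?thesis .
qed

lemma sum_polys_deg_less_Dk_Dp:
  fixes k l :: nat
  assumes "l < CARD('a::{finite,field}) ^ n"
  shows "(\<Sum>m\<in>(polys_deg_less n :: 'a poly set). Dk k m * Dp l m) =
           (if k + l + 1 = CARD('a) ^ n then (-1) ^ n else 0)"
proof (cases "k < CARD('a) ^ n")
  case True
  then show ?thesis
    using sum_shift_Dk_Dp[OF True assms, of 0] by simp
next
  case False
  then show ?thesis
    by (simp add: Dk_eq_0 not_less)
qed

lemma sum_monic_Dk_Dp:
  fixes k l :: nat
  assumes "k < CARD('a::{finite,field}) ^ n" "l < CARD('a) ^ n"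
  shows "(\<Sum>m\<in>{m :: 'a poly. lead_coeff m = 1 \<and> degree m = n}. Dk k m * Dp l m) =
           (if k + l + 1 = CARD('a) ^ n then (-1) ^ n else 0)"
  using sum_shift_Dk_Dp[OF assms, of "monom 1 n"]
  by (simp add: monic_degree_eq_image sum.reindex inj_on_def)

theorem theorem9:
  fixes n k l :: nat
  assumes "l < CARD('a::{finite,field}) ^ n"
  shows "(\<Sum>m\<in>{m :: 'a poly. m = 0 \<or> degree m < n}. Dk k m * Dp l m) =
           (if k + l \<noteq> CARD('a) ^ n - 1 then 0 else (-1) ^ n)
         \<and> (k < CARD('a) ^ n \<longrightarrow>
         (\<Sum>m\<in>{m :: 'a poly. lead_coeff m = 1 \<and> degree m = n}. Dk k m * Dp l m) =
           (if k + l \<noteq> CARD('a) ^ n - 1 then 0 else (-1) ^ n))"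
proof -
  have "0 < CARD('a) ^ n"
    using card_field_ge_2[where 'a='a] by simp
  then have "k + l \<noteq> CARD('a) ^ n - 1 \<longleftrightarrow> k + l + 1 \<noteq> CARD('a) ^ n"
    by linarith
  then show ?thesis
    using sum_polys_deg_less_Dk_Dp[OF assms, of k] sum_monic_Dk_Dp[OF _ assms, of k]
    by (simp add: polys_deg_less_def)
qed

end
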